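(* Let $v$ be a weight on $\mathbb D$ and let $(X,\|\cdot\|)$ be a Banach space of analytic functions in $\mathbb D$. Let $\varphi$ be an entire function. If the superposition operator $S_\varphi$ is a bounded operator from $X$ into $DH^\infty_v$, then $S_{\varphi'}$ maps $X$ into $DH^\infty_v$.
   Context: For $\varphi$ entire, $S_\varphi(f)=\varphi\circ f$ for $f$ analytic in the unit disc $\mathbb D$. A weight on $\mathbb D$ is a positive continuous function $v$ on $\mathbb D$ which is radial ($v(z)=v(|z|)$), with $r\mapsto v(r)$ strictly decreasing on $[0,1)$ and $\lim_{r\to1}v(r)=0$. $H^\infty_v=\{f\text{ analytic in }\mathbb D:\sup_{z\in\mathbb D}v(z)|f(z)|<\infty\}$ with norm $\|f\|_v=\sup_{z}v(z)|f(z)|$, and $DH^\infty_v=\{f\text{ analytic in }\mathbb D: f'\in H^\infty_v\}$ with norm $\|f\|_{D,v}=|f(0)|+\|f'\|_v$. "Bounded" for the nonlinear operator $S_\varphi$ means it maps $X$ into $DH^\infty_v$ and maps bounded subsets of $X$ to bounded subsets of $DH^\infty_v$. *)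

theory Defs
  imports "HOL-Analysis.Analysis"
begin

abbreviation unit_disc :: "complex set" where
  "unit_disc \<equiv> ball 0 1"

definition is_weight :: "(complex \<Rightarrow> real) \<Rightarrow> bool" where
  "is_weight v \<longleftrightarrow>
     continuous_on unit_disc v \<and>
     (\<forall>z\<in>unit_disc. v z > 0) \<and>
     (\<forall>z\<in>unit_disc. v z = v (complex_of_real (cmod z))) \<and>
     (\<forall>r s. 0 \<le> r \<longrightarrow> r < s \<longrightarrow> s < 1 \<longrightarrow>
        v (complex_of_real s) < v (complex_of_real r)) \<and>
     ((\<lambda>r. v (complex_of_real r)) \<longlongrightarrow> 0) (at_left 1)"

definition in_Hv :: "(complex \<Rightarrow> real) \<Rightarrow> (complex \<Rightarrow> complex) \<Rightarrow> bool" where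
  "in_Hv v f \<longleftrightarrow> f holomorphic_on unit_disc \<and>
     (\<exists>C. \<forall>z\<in>unit_disc. v z * cmod (f z) \<le> C)"

definition in_DHv :: "(complex \<Rightarrow> real) \<Rightarrow> (complex \<Rightarrow> complex) \<Rightarrow> bool" where
  "in_DHv v f \<longleftrightarrow> f holomorphic_on unit_disc \<and> in_Hv v (deriv f)"

definition norm_Hv :: "(complex \<Rightarrow> real) \<Rightarrow> (complex \<Rightarrow> complex) \<Rightarrow> real" where
  "norm_Hv v f = (SUP z\<in>unit_disc. v z * cmod (f z))"

definition norm_DHv :: "(complex \<Rightarrow> real) \<Rightarrow> (complex \<Rightarrow> complex) \<Rightarrow> real" where
  "norm_DHv v f = cmod (f 0) + norm_Hv v (deriv f)"

definition banach_space_analytic ::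
  "(complex \<Rightarrow> complex) set \<Rightarrow> ((complex \<Rightarrow> complex) \<Rightarrow> real) \<Rightarrow> bool" where
  "banach_space_analytic X N \<longleftrightarrow>
     (\<forall>f\<in>X. f holomorphic_on unit_disc) \<and>
     (\<forall>c. (\<lambda>_. c) \<in> X) \<and>
     (\<forall>f\<in>X. \<forall>g\<in>X. (\<lambda>z. f z + g z) \<in> X) \<and>
     (\<forall>f\<in>X. \<forall>c. (\<lambda>z. c * f z) \<in> X) \<and>
     (\<forall>f\<in>X. N f \<ge> 0) \<and>
     (\<forall>f\<in>X. N f = 0 \<longleftrightarrow> (\<forall>z\<in>unit_disc. f z = 0)) \<and>
     (\<forall>f\<in>X. \<forall>g\<in>X. N (\<lambda>z. f z + g z) \<le> N f + N g) \<and>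
     (\<forall>f\<in>X. \<forall>c. N (\<lambda>z. c * f z) = cmod c * N f) \<and>
     (\<forall>f\<in>X. \<forall>g\<in>X. (\<forall>z\<in>unit_disc. f z = g z) \<longrightarrow> N f = N g) \<and>
     (\<forall>z\<in>unit_disc. \<exists>C. \<forall>f\<in>X. cmod (f z) \<le> C * N f) \<and>
     (\<forall>F. (\<forall>n. F n \<in> X) \<longrightarrow>
        (\<forall>e>0. \<exists>K. \<forall>m\<ge>K. \<forall>n\<ge>K. N (\<lambda>z. F m z - F n z) < e) \<longrightarrow>
        (\<exists>f\<in>X. ((\<lambda>n. N (\<lambda>z. F n z - f z)) \<longlongrightarrow> 0) sequentially))"

definition superposition_bounded ::
  "(complex \<Rightarrow> complex) \<Rightarrow> (complex \<Rightarrow> complex) set \<Rightarrow> ((complex \<Rightarrow> complex) \<Rightarrow> real)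
     \<Rightarrow> (complex \<Rightarrow> real) \<Rightarrow> bool" where
  "superposition_bounded \<phi> X N v \<longleftrightarrow>
     (\<forall>f\<in>X. in_DHv v (\<phi> \<circ> f)) \<and>
     (\<forall>B\<subseteq>X. (\<exists>R. \<forall>f\<in>B. N f \<le> R) \<longrightarrow> (\<exists>M. \<forall>f\<in>B. norm_DHv v (\<phi> \<circ> f) \<le> M))"

end

theory Submission
  imports Defs "HOL-Complex_Analysis.Complex_Analysis"
begin

text \<open>Translating f by unimodular constants c gives a bounded subset of X, so the derivatives
  \<open>\<phi>'(f z + c) f'(z)\<close> are bounded by \<open>M / v z\<close> uniformly in c. For fixed z,
  \<open>c \<mapsto> \<phi>'(f z + c) f'(z)\<close> is entire, and the Cauchy inequality on the unit circle bounds
  its derivative \<open>\<phi>''(f z) f'(z) = (\<phi>' \<circ> f)'(z)\<close> at the centre by the same \<open>M / v z\<close>.\<close>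

lemma is_weight_pos: "is_weight v \<Longrightarrow> z \<in> unit_disc \<Longrightarrow> v z > 0"
  unfolding is_weight_def by blast

lemma in_Hv_le_norm_Hv:
  assumes "in_Hv v g" "z \<in> unit_disc"
  shows "v z * cmod (g z) \<le> norm_Hv v g"
proof -
  obtain C where "\<forall>u\<in>unit_disc. v u * cmod (g u) \<le> C"
    using assms(1) unfolding in_Hv_def by blast
  then have "bdd_above ((\<lambda>u. v u * cmod (g u)) ` unit_disc)"
    by (auto intro: bdd_aboveI2)
  then show ?thesis
    unfolding norm_Hv_def using assms(2) by (rule cSUP_upper2) simp
qed

lemma in_DHv_deriv_le_norm_DHv:
  assumes "in_DHv v g" "z \<in> unit_disc"
  shows "v z * cmod (deriv g z) \<le> norm_DHv v g"
proof -
  have "v z * cmod (deriv g z) \<le> norm_Hv v (deriv g)"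
    using assms unfolding in_DHv_def by (blast intro: in_Hv_le_norm_Hv)
  then show ?thesis
    unfolding norm_DHv_def by (simp add: add.commute add_increasing)
qed

lemma banach_space_analytic_holomorphic:
  "banach_space_analytic X N \<Longrightarrow> f \<in> X \<Longrightarrow> f holomorphic_on unit_disc"
  unfolding banach_space_analytic_def by (elim conjE) blast

lemma banach_space_analytic_const: "banach_space_analytic X N \<Longrightarrow> (\<lambda>_. c) \<in> X"
  unfolding banach_space_analytic_def by (elim conjE) (erule allE)

lemma banach_space_analytic_add:
  "banach_space_analytic X N \<Longrightarrow> f \<in> X \<Longrightarrow> g \<in> X \<Longrightarrow> (\<lambda>z. f z + g z) \<in> X"
  unfolding banach_space_analytic_def by (elim conjE) blast

lemma banach_space_analytic_norm_triangle:
  "banach_space_analytic X N \<Longrightarrow> f \<in> X \<Longrightarrow> g \<in> X \<Longrightarrow> N (\<lambda>z. f z + g z) \<le> N f + N g"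
  unfolding banach_space_analytic_def by (elim conjE) blast

lemma banach_space_analytic_norm_mult:
  "banach_space_analytic X N \<Longrightarrow> f \<in> X \<Longrightarrow> N (\<lambda>z. c * f z) = cmod c * N f"
  unfolding banach_space_analytic_def by (elim conjE) blast

lemma superposition_bounded_in_DHv:
  "superposition_bounded \<phi> X N v \<Longrightarrow> f \<in> X \<Longrightarrow> in_DHv v (\<phi> \<circ> f)"
  unfolding superposition_bounded_def by blast

lemma superposition_bounded_boundedD:
  "superposition_bounded \<phi> X N v \<Longrightarrow> B \<subseteq> X \<Longrightarrow> \<forall>f\<in>B. N f \<le> R \<Longrightarrow>
    \<exists>M. \<forall>f\<in>B. norm_DHv v (\<phi> \<circ> f) \<le> M"
  unfolding superposition_bounded_def by blast

lemma banach_space_analytic_translate: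
  assumes "banach_space_analytic X N" "f \<in> X"
  shows "(\<lambda>z. f z + c) \<in> X" and "N (\<lambda>z. f z + c) \<le> N f + cmod c * N (\<lambda>_. 1)"
proof -
  have const: "(\<lambda>_. c) \<in> X" "(\<lambda>_. 1) \<in> X"
    using assms(1) by (rule banach_space_analytic_const)+
  show "(\<lambda>z. f z + c) \<in> X"
    using banach_space_analytic_add[OF assms const(1)] .
  have "N (\<lambda>z. f z + c) \<le> N f + N (\<lambda>_. c)"
    using banach_space_analytic_norm_triangle[OF assms const(1)] .
  moreover have "N (\<lambda>_. c) = cmod c * N (\<lambda>_. 1)"
    using banach_space_analytic_norm_mult[OF assms(1) const(2), of c] by simp
  ultimately show "N (\<lambda>z. f z + c) \<le> N f + cmod c * N (\<lambda>_. 1)"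
    by simp
qed

lemma superposition_bounded_unimodular_translates:
  assumes "banach_space_analytic X N" "superposition_bounded \<phi> X N v" "f \<in> X"
  obtains M where "\<And>c z. cmod c = 1 \<Longrightarrow> z \<in> unit_disc \<Longrightarrow>
    v z * cmod (deriv (\<phi> \<circ> (\<lambda>z. f z + c)) z) \<le> M"
proof -
  define B where "B = (\<lambda>c z. f z + c) ` {c. cmod c = 1}"
  have "B \<subseteq> X"
    unfolding B_def using banach_space_analytic_translate(1)[OF assms(1,3)] by blast
  moreover have "\<forall>g\<in>B. N g \<le> N f + N (\<lambda>_. 1)"
  proof
    fix g assume "g \<in> B"
    then obtain c where "cmod c = 1" "g = (\<lambda>z. f z + c)"
      unfolding B_def by blast
    then show "N g \<le> N f + N (\<lambda>_. 1)"
      using banach_space_analytic_translate(2)[OF assms(1,3), of c] by simp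
  qed
  ultimately obtain M where M: "\<forall>g\<in>B. norm_DHv v (\<phi> \<circ> g) \<le> M"
    using superposition_bounded_boundedD[OF assms(2)] by blast
  show thesis
  proof (rule that)
    fix c z assume c: "cmod c = 1" and z: "z \<in> unit_disc"
    have "in_DHv v (\<phi> \<circ> (\<lambda>z. f z + c))"
      using superposition_bounded_in_DHv[OF assms(2) banach_space_analytic_translate(1)[OF assms(1,3)]] .
    then have "v z * cmod (deriv (\<phi> \<circ> (\<lambda>z. f z + c)) z) \<le> norm_DHv v (\<phi> \<circ> (\<lambda>z. f z + c))"
      using z by (rule in_DHv_deriv_le_norm_DHv)
    also have "\<dots> \<le> M"
      using M c unfolding B_def by blast
    finally show "v z * cmod (deriv (\<phi> \<circ> (\<lambda>z. f z + c)) z) \<le> M" .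
  qed
qed

lemma entire_deriv_le_unit_circle_bound:
  assumes "h holomorphic_on UNIV" "\<And>u. norm (w - u) = 1 \<Longrightarrow> norm (h u) \<le> B"
  shows "norm (deriv h w) \<le> B"
  using Cauchy_inequality[of h w 1 B 1] assms
  by (auto intro: holomorphic_on_subset holomorphic_on_imp_continuous_on)

lemma deriv_compose_translate:
  assumes "f field_differentiable at z" "\<phi> holomorphic_on UNIV"
  shows "deriv (\<phi> \<circ> (\<lambda>z. f z + c)) z = deriv \<phi> (f z + c) * deriv f z"
proof -
  have "(\<lambda>z. f z + c) field_differentiable at z"
    using assms(1) by (auto intro: field_differentiable_add field_differentiable_const)
  moreover have "\<phi> field_differentiable at (f z + c)"
    using assms(2) holomorphic_on_imp_differentiable_at by blast
  ultimately have "deriv (\<phi> \<circ> (\<lambda>z. f z + c)) z = deriv \<phi> (f z + c) * deriv (\<lambda>z. f z + c) z"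
    by (rule deriv_chain)
  moreover have "deriv (\<lambda>z. f z + c) z = deriv f z"
    using assms(1) by (subst deriv_add) (auto simp: field_differentiable_const)
  ultimately show ?thesis
    by simp
qed

lemma deriv_compose_deriv_le_translates_bound:
  assumes "\<phi> holomorphic_on UNIV" "f field_differentiable at z"
    and "\<And>c. cmod c = 1 \<Longrightarrow> cmod (deriv (\<phi> \<circ> (\<lambda>z. f z + c)) z) \<le> K"
  shows "cmod (deriv (deriv \<phi> \<circ> f) z) \<le> K"
proof -
  have \<phi>'_hol: "deriv \<phi> holomorphic_on UNIV"
    using assms(1) by (simp add: holomorphic_deriv)
  have "norm (deriv (\<lambda>u. deriv f z * deriv \<phi> u) (f z)) \<le> K"
  proof (rule entire_deriv_le_unit_circle_bound)
    show "(\<lambda>u. deriv f z * deriv \<phi> u) holomorphic_on UNIV"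
      using \<phi>'_hol by (auto intro: holomorphic_on_mult)
    fix u assume "norm (f z - u) = 1"
    then show "norm (deriv f z * deriv \<phi> u) \<le> K"
      using assms(3)[of "u - f z"] deriv_compose_translate[OF assms(2,1)]
      by (simp add: norm_minus_commute mult.commute)
  qed
  moreover have "deriv (\<lambda>u. deriv f z * deriv \<phi> u) (f z) = deriv (deriv \<phi> \<circ> f) z"
    using deriv_cmult[of "deriv \<phi>" "f z" "deriv f z"] deriv_chain[OF assms(2), of "deriv \<phi>"]
      \<phi>'_hol holomorphic_on_imp_differentiable_at by (auto simp: mult.commute)
  ultimately show ?thesis
    by simp
qed

theorem theorem5:
  fixes v :: "complex \<Rightarrow> real"
    and X :: "(complex \<Rightarrow> complex) set"
    and N :: "(complex \<Rightarrow> complex) \<Rightarrow> real"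
    and \<phi> :: "complex \<Rightarrow> complex"
  assumes "is_weight v"
    and "banach_space_analytic X N"
    and "\<phi> holomorphic_on UNIV"
    and "superposition_bounded \<phi> X N v"
  shows "\<forall>f\<in>X. in_DHv v (deriv \<phi> \<circ> f)"
proof
  fix f assume f: "f \<in> X"
  have f_hol: "f holomorphic_on unit_disc"
    using assms(2) f by (rule banach_space_analytic_holomorphic)
  have comp_hol: "deriv \<phi> \<circ> f holomorphic_on unit_disc"
    using holomorphic_on_compose[OF f_hol holomorphic_on_subset[OF holomorphic_deriv]] assms(3)
    by auto
  obtain M where M: "\<And>c z. cmod c = 1 \<Longrightarrow> z \<in> unit_disc \<Longrightarrow>
      v z * cmod (deriv (\<phi> \<circ> (\<lambda>z. f z + c)) z) \<le> M"
    using superposition_bounded_unimodular_translates[OF assms(2,4) f] by blast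
  have "v z * cmod (deriv (deriv \<phi> \<circ> f) z) \<le> M" if z: "z \<in> unit_disc" for z
  proof -
    have v_pos: "v z > 0"
      using assms(1) z by (rule is_weight_pos)
    have "cmod (deriv (deriv \<phi> \<circ> f) z) \<le> M / v z"
      using assms(3) holomorphic_on_imp_differentiable_at[OF f_hol open_ball z]
      by (rule deriv_compose_deriv_le_translates_bound)
        (use M[OF _ z] v_pos in \<open>simp add: field_simps\<close>)
    then show ?thesis
      using v_pos by (simp add: field_simps)
  qed
  then show "in_DHv v (deriv \<phi> \<circ> f)"
    unfolding in_DHv_def in_Hv_def using comp_hol holomorphic_deriv[OF comp_hol] by blast
qed

end
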